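(* Let $X\subset\mathbb{R}^n$, $n\ge2$, be an open convex bounded domain, let $\alpha\in\mathbb{R}$ with $(n-2)\alpha+1\neq0$, let $\sigma>0$ be a (sufficiently smooth) conductivity on $X$ and let $u_1,\dots,u_n$ be (sufficiently smooth) solutions of $\nabla\cdot(\sigma\nabla u_i)=0$ in $X$. Set $S_i=\sigma^\alpha\nabla u_i$. Let $\Omega\subset X$ be open with $$\inf_{x\in\Omega}\det(S_1(x),\dots,S_n(x))\ge c_0>0.$$ Let $H(x)$ be the $n\times n$ matrix with entries $H_{ij}(x)=S_i(x)\cdot S_j(x)$, $H^{ij}$ the $(i,j)$ entry of $H^{-1}$, and $D(x)=\sqrt{\det H(x)}$. Then at every $x\in\Omega$, $F:=\nabla\log\sigma$ satisfies $$F=\frac{c_F}{D}\sum_{i,j=1}^n\big(\nabla(DH^{ij})\cdot S_i\big)S_j=c_F\Big(\nabla\log D+\sum_{i,j=1}^n(\nabla H^{ij}\cdot S_i)S_j\Big),\qquad c_F:=((n-2)\alpha+1)^{-1}.$$ *)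

theory Defs
  imports "HOL-Analysis.Analysis"
begin

definition partial :: "(real^'n \<Rightarrow> real) \<Rightarrow> 'n \<Rightarrow> real^'n \<Rightarrow> real" where
  "partial f j x = deriv (\<lambda>t. f (x + t *\<^sub>R axis j 1)) 0"

definition grad :: "(real^'n \<Rightarrow> real) \<Rightarrow> real^'n \<Rightarrow> real^'n" where
  "grad f x = (\<chi> j. partial f j x)"

definition divergence :: "(real^'n \<Rightarrow> real^'n) \<Rightarrow> real^'n \<Rightarrow> real" where
  "divergence V x = (\<Sum>j\<in>UNIV. partial (\<lambda>y. V y $ j) j x)"

fun Ck :: "nat \<Rightarrow> (real^'n \<Rightarrow> real) \<Rightarrow> (real^'n) set \<Rightarrow> bool" where
  "Ck 0 f X = continuous_on X f"
| "Ck (Suc k) f X = ((\<forall>x\<in>X. f differentiable (at x)) \<and> (\<forall>j. Ck k (partial f j) X))"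

end

theory Submission
  imports Defs
begin

text \<open>Let \<open>A\<close> be the matrix with columns \<open>S\<^sub>i\<close>, so that \<open>H = A\<^sup>T A\<close> and \<open>D = \<bar>det A\<bar>\<close>, and
  let \<open>G\<^sub>k = \<partial>\<^sub>k A\<close>. Then \<open>\<partial>\<^sub>k H\<^sup>-\<^sup>1 = -H\<^sup>-\<^sup>1 (G\<^sub>k\<^sup>T A + A\<^sup>T G\<^sub>k) H\<^sup>-\<^sup>1\<close> and, by Jacobi's formula,
  \<open>\<partial>\<^sub>k log D = tr (A\<^sup>-\<^sup>1 G\<^sub>k)\<close>, so \<open>\<Sum>\<^sub>i\<^sub>j (\<nabla>H\<^sup>i\<^sup>j \<cdot> S\<^sub>i) S\<^sub>j\<close> is an explicit contraction of the
  \<open>G\<^sub>k\<close> against \<open>A\<^sup>-\<^sup>1\<close>. With \<open>F = \<nabla>log \<sigma>\<close>, the fields \<open>S\<^sub>i = \<sigma>\<^sup>\<alpha> \<nabla>u\<^sub>i\<close> satisfy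
  \<open>curl S\<^sub>i = \<alpha> F \<and> S\<^sub>i\<close> (symmetry of the Hessian of \<open>u\<^sub>i\<close>) and \<open>\<nabla>\<cdot>S\<^sub>i = (\<alpha> - 1) F\<cdot>S\<^sub>i\<close>
  (from \<open>\<nabla>\<cdot>(\<sigma>\<nabla>u\<^sub>i) = 0\<close>); these two relations reduce the contraction to
  \<open>((n - 2)\<alpha> + 1) F - \<nabla>log D\<close>. The first formula then follows from the product rule, because
  \<open>\<Sum>\<^sub>i\<^sub>j H\<^sup>i\<^sup>j (v\<cdot>S\<^sub>i) S\<^sub>j = v\<close> for every vector \<open>v\<close>.\<close>

lemma has_real_derivative_along_line:
  fixes f :: "real^'n \<Rightarrow> real"
  assumes "f differentiable (at (z + s *\<^sub>R v))"
  shows "((\<lambda>s. f (z + s *\<^sub>R v)) has_real_derivative frechet_derivative f (at (z + s *\<^sub>R v)) v) (at s)"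
proof -
  let ?f' = "frechet_derivative f (at (z + s *\<^sub>R v))"
  have f: "(f has_derivative ?f') (at (z + s *\<^sub>R v))"
    using assms frechet_derivative_works by blast
  have "((\<lambda>s. z + s *\<^sub>R v) has_derivative (\<lambda>h. h *\<^sub>R v)) (at s)"
    by (auto intro!: derivative_eq_intros)
  from has_derivative_compose[OF this f]
  have "((\<lambda>s. f (z + s *\<^sub>R v)) has_derivative (\<lambda>h. ?f' (h *\<^sub>R v))) (at s)"
    by (simp add: o_def)
  moreover have "(\<lambda>h. ?f' (h *\<^sub>R v)) = (\<lambda>h. ?f' v * h)"
    using linear_cmul[OF has_derivative_linear[OF f]] by (auto simp: mult.commute)
  ultimately show ?thesis by (simp add: has_field_derivative_def)
qed

lemma partial_eqI:
  assumes "((\<lambda>t. f (x + t *\<^sub>R axis j 1)) has_real_derivative d) (at 0)"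
  shows "partial f j x = d"
  using assms by (simp add: partial_def DERIV_imp_deriv)

lemma partial_eq_frechet_derivative:
  fixes f :: "real^'n \<Rightarrow> real"
  assumes "f differentiable (at x)"
  shows "partial f j x = frechet_derivative f (at x) (axis j 1)"
  using has_real_derivative_along_line[of f x 0 "axis j 1"] assms by (intro partial_eqI) simp

lemma has_real_derivative_partial_at:
  fixes f :: "real^'n \<Rightarrow> real"
  assumes "f differentiable (at (z + s *\<^sub>R axis j 1))"
  shows "((\<lambda>s. f (z + s *\<^sub>R axis j 1)) has_real_derivative partial f j (z + s *\<^sub>R axis j 1)) (at s)"
  using has_real_derivative_along_line[OF assms] partial_eq_frechet_derivative[OF assms] by simp

lemma has_real_derivative_partial:
  fixes f :: "real^'n \<Rightarrow> real"
  assumes "f differentiable (at x)"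
  shows "((\<lambda>t. f (x + t *\<^sub>R axis j 1)) has_real_derivative partial f j x) (at 0)"
  using has_real_derivative_partial_at[of f x 0 j] assms by simp

definition has_partials :: "(real^'n \<Rightarrow> real) \<Rightarrow> real^'n \<Rightarrow> real^'n \<Rightarrow> bool" where
  "has_partials f g x \<longleftrightarrow> (\<forall>k. ((\<lambda>s. f (x + s *\<^sub>R axis k 1)) has_real_derivative g $ k) (at 0))"

lemma grad_eqI: "has_partials f g x \<Longrightarrow> grad f x = g"
  by (simp add: has_partials_def grad_def vec_eq_iff partial_eqI)

lemma has_partials_grad:
  fixes f :: "real^'n \<Rightarrow> real"
  shows "f differentiable (at x) \<Longrightarrow> has_partials f (grad f x) x"
  by (simp add: has_partials_def grad_def has_real_derivative_partial)

lemma has_partials_mult: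
  assumes "has_partials f df x" "has_partials g dg x"
  shows "has_partials (\<lambda>y. f y * g y) (g x *\<^sub>R df + f x *\<^sub>R dg) x"
  using assms unfolding has_partials_def
  by (auto intro!: DERIV_cong[OF DERIV_mult] simp: algebra_simps)

lemma has_partials_ln:
  assumes "has_partials f df x" "f x > 0"
  shows "has_partials (\<lambda>y. ln (f y)) ((1 / f x) *\<^sub>R df) x"
  using assms unfolding has_partials_def
  by (auto intro!: DERIV_cong[OF DERIV_chain2[OF DERIV_ln]] simp: divide_inverse)

lemma Ck_2_iff:
  "Ck 2 f X \<longleftrightarrow> (\<forall>x\<in>X. f differentiable (at x)) \<and>
     (\<forall>j. (\<forall>x\<in>X. partial f j differentiable (at x)) \<and> (\<forall>l. continuous_on X (partial (partial f j) l)))"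
  by (simp add: numeral_2_eq_2)

lemma dist_axis_steps_le:
  fixes x :: "real^'n"
  assumes "\<bar>a\<bar> \<le> h" "\<bar>b\<bar> \<le> h"
  shows "dist (x + a *\<^sub>R axis k 1 + b *\<^sub>R axis l 1) x \<le> 2 * h"
proof -
  have "norm (a *\<^sub>R axis k (1::real) + b *\<^sub>R axis l 1)
      \<le> norm (a *\<^sub>R axis k (1::real)) + norm (b *\<^sub>R axis l (1::real))"
    by (rule norm_triangle_ineq)
  also have "\<dots> \<le> 2 * h" using assms by simp
  finally show ?thesis by (simp add: dist_norm add.assoc)
qed

lemma second_difference_mean_value:
  fixes f :: "real^'n \<Rightarrow> real"
  assumes X: "ball x r \<subseteq> X" and h: "0 < h" "2 * h < r"
    and df: "\<forall>y\<in>X. f differentiable (at y)"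
    and dpf: "\<forall>y\<in>X. partial f k differentiable (at y)"
  obtains \<xi> \<eta> where "0 < \<xi>" "\<xi> < h" "0 < \<eta>" "\<eta> < h"
    "f (x + h *\<^sub>R axis k 1 + h *\<^sub>R axis l 1) - f (x + h *\<^sub>R axis k 1) - f (x + h *\<^sub>R axis l 1) + f x
       = h\<^sup>2 * partial (partial f k) l (x + \<xi> *\<^sub>R axis k 1 + \<eta> *\<^sub>R axis l 1)"
proof -
  let ?ek = "axis k (1::real) :: real^'n" and ?el = "axis l (1::real) :: real^'n"
  have inX: "x + a *\<^sub>R ?ek + b *\<^sub>R ?el \<in> X" if "\<bar>a\<bar> \<le> h" "\<bar>b\<bar> \<le> h" for a b
    using dist_axis_steps_le[OF that, of x k l] h X by (auto simp: dist_commute)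
  define \<phi> where "\<phi> s = f ((x + h *\<^sub>R ?el) + s *\<^sub>R ?ek) - f (x + s *\<^sub>R ?ek)" for s
  have "\<exists>z. 0 < z \<and> z < h \<and> \<phi> h - \<phi> 0 = (h - 0) *
      (partial f k ((x + h *\<^sub>R ?el) + z *\<^sub>R ?ek) - partial f k (x + z *\<^sub>R ?ek))"
  proof (rule MVT2)
    fix s assume s: "0 \<le> s" "s \<le> h"
    have "f differentiable (at ((x + h *\<^sub>R ?el) + s *\<^sub>R ?ek))"
      using df inX[of s h] s h by (simp add: algebra_simps)
    moreover have "f differentiable (at (x + s *\<^sub>R ?ek))"
      using df inX[of s 0] s h by simp
    ultimately show "(\<phi> has_real_derivative
        (partial f k ((x + h *\<^sub>R ?el) + s *\<^sub>R ?ek) - partial f k (x + s *\<^sub>R ?ek))) (at s)"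
      unfolding \<phi>_def by (intro derivative_intros has_real_derivative_partial_at)
  qed (use h in auto)
  then obtain \<xi> where \<xi>: "0 < \<xi>" "\<xi> < h" and \<phi>_diff: "\<phi> h - \<phi> 0 = h *
      (partial f k ((x + \<xi> *\<^sub>R ?ek) + h *\<^sub>R ?el) - partial f k ((x + \<xi> *\<^sub>R ?ek) + 0 *\<^sub>R ?el))"
    by (auto simp: algebra_simps)
  define \<psi> where "\<psi> t = partial f k ((x + \<xi> *\<^sub>R ?ek) + t *\<^sub>R ?el)" for t
  have "\<exists>z. 0 < z \<and> z < h \<and> \<psi> h - \<psi> 0 = (h - 0) * partial (partial f k) l ((x + \<xi> *\<^sub>R ?ek) + z *\<^sub>R ?el)"
  proof (rule MVT2)
    fix t assume t: "0 \<le> t" "t \<le> h"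
    have "partial f k differentiable (at ((x + \<xi> *\<^sub>R ?ek) + t *\<^sub>R ?el))"
      using dpf inX[of \<xi> t] t \<xi> by simp
    then show "(\<psi> has_real_derivative partial (partial f k) l ((x + \<xi> *\<^sub>R ?ek) + t *\<^sub>R ?el)) (at t)"
      unfolding \<psi>_def by (rule has_real_derivative_partial_at)
  qed (use h in auto)
  then obtain \<eta> where \<eta>: "0 < \<eta>" "\<eta> < h"
    and \<psi>_diff: "\<psi> h - \<psi> 0 = h * partial (partial f k) l ((x + \<xi> *\<^sub>R ?ek) + \<eta> *\<^sub>R ?el)"
    by auto
  have "f (x + h *\<^sub>R ?ek + h *\<^sub>R ?el) - f (x + h *\<^sub>R ?ek) - f (x + h *\<^sub>R ?el) + f x = \<phi> h - \<phi> 0"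
    by (simp add: \<phi>_def algebra_simps)
  also have "\<dots> = h * (\<psi> h - \<psi> 0)" using \<phi>_diff by (simp add: \<psi>_def)
  also have "\<dots> = h\<^sup>2 * partial (partial f k) l (x + \<xi> *\<^sub>R ?ek + \<eta> *\<^sub>R ?el)"
    using \<psi>_diff by (simp add: power2_eq_square)
  finally show ?thesis using that \<xi> \<eta> by blast
qed

lemma partial_commute:
  fixes f :: "real^'n \<Rightarrow> real"
  assumes X: "open X" "x \<in> X"
    and df: "\<forall>y\<in>X. f differentiable (at y)"
    and dpk: "\<forall>y\<in>X. partial f k differentiable (at y)"
    and dpl: "\<forall>y\<in>X. partial f l differentiable (at y)"
    and ckl: "continuous_on X (partial (partial f k) l)"
    and clk: "continuous_on X (partial (partial f l) k)"
  shows "partial (partial f k) l x = partial (partial f l) k x"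
proof (rule ccontr)
  let ?a = "partial (partial f k) l x" and ?b = "partial (partial f l) k x"
  assume "?a \<noteq> ?b"
  define e where "e = \<bar>?a - ?b\<bar> / 2"
  have e: "e > 0" using \<open>?a \<noteq> ?b\<close> by (simp add: e_def)
  obtain r where r: "r > 0" "ball x r \<subseteq> X" using X open_contains_ball by blast
  obtain d1 where d1: "d1 > 0" "\<forall>y\<in>X. dist y x < d1 \<longrightarrow> dist (partial (partial f k) l y) ?a < e"
    using ckl X e unfolding continuous_on_iff by blast
  obtain d2 where d2: "d2 > 0" "\<forall>y\<in>X. dist y x < d2 \<longrightarrow> dist (partial (partial f l) k y) ?b < e"
    using clk X e unfolding continuous_on_iff by blast
  define h where "h = min r (min d1 d2) / 4"
  have h: "0 < h" "2 * h < r" "2 * h < d1" "2 * h < d2" using r d1 d2 by (auto simp: h_def)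
  obtain \<xi> \<eta> where p: "0 < \<xi>" "\<xi> < h" "0 < \<eta>" "\<eta> < h" and E1:
     "f (x + h *\<^sub>R axis k 1 + h *\<^sub>R axis l 1) - f (x + h *\<^sub>R axis k 1) - f (x + h *\<^sub>R axis l 1) + f x
       = h\<^sup>2 * partial (partial f k) l (x + \<xi> *\<^sub>R axis k 1 + \<eta> *\<^sub>R axis l 1)"
    using second_difference_mean_value[OF r(2) h(1,2) df dpk] by blast
  obtain \<xi>' \<eta>' where p': "0 < \<xi>'" "\<xi>' < h" "0 < \<eta>'" "\<eta>' < h" and E2:
     "f (x + h *\<^sub>R axis l 1 + h *\<^sub>R axis k 1) - f (x + h *\<^sub>R axis l 1) - f (x + h *\<^sub>R axis k 1) + f x
       = h\<^sup>2 * partial (partial f l) k (x + \<xi>' *\<^sub>R axis l 1 + \<eta>' *\<^sub>R axis k 1)"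
    using second_difference_mean_value[OF r(2) h(1,2) df dpl] by blast
  define y where "y = x + \<xi> *\<^sub>R axis k 1 + \<eta> *\<^sub>R axis l 1"
  define y' where "y' = x + \<xi>' *\<^sub>R axis l 1 + \<eta>' *\<^sub>R axis k 1"
  have "x + h *\<^sub>R axis l 1 + h *\<^sub>R axis k 1 = x + h *\<^sub>R axis k 1 + h *\<^sub>R axis l (1::real)"
    by (simp add: algebra_simps)
  with E1 E2 h have eq: "partial (partial f k) l y = partial (partial f l) k y'"
    by (simp add: y_def y'_def algebra_simps)
  have "dist y x \<le> 2 * h" "dist y' x \<le> 2 * h"
    using p p' unfolding y_def y'_def by (intro dist_axis_steps_le; simp)+
  with h r have "y \<in> X" "y' \<in> X" "dist y x < d1" "dist y' x < d2"
    by (auto simp: dist_commute)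
  with d1 d2 have "\<bar>partial (partial f k) l y - ?a\<bar> < e" "\<bar>partial (partial f l) k y' - ?b\<bar> < e"
    by (auto simp: dist_real_def)
  then show False using eq by (simp add: e_def abs_if split: if_splits)
qed

lemma Ck_2_partial_commute:
  assumes "Ck 2 f X" "open X" "x \<in> X"
  shows "partial (partial f k) l x = partial (partial f l) k x"
  using assms by (intro partial_commute) (auto simp: Ck_2_iff)

definition has_matrix_derivative :: "(real \<Rightarrow> real^'n^'m) \<Rightarrow> real^'n^'m \<Rightarrow> real \<Rightarrow> bool" where
  "has_matrix_derivative M M' t \<longleftrightarrow> (\<forall>a b. ((\<lambda>s. M s $ a $ b) has_real_derivative M' $ a $ b) (at t))"

lemma has_matrix_derivative_transpose:
  assumes "has_matrix_derivative M M' t"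
  shows "has_matrix_derivative (\<lambda>s. transpose (M s)) (transpose M') t"
  using assms by (simp add: has_matrix_derivative_def transpose_def)

lemma has_matrix_derivative_mult:
  assumes "has_matrix_derivative M M' t" "has_matrix_derivative P P' t"
  shows "has_matrix_derivative (\<lambda>s. M s ** P s) (M' ** P t + M t ** P') t"
  unfolding has_matrix_derivative_def
proof (intro allI)
  fix a b
  have "((\<lambda>s. \<Sum>c\<in>UNIV. M s $ a $ c * P s $ c $ b) has_real_derivative
      (\<Sum>c\<in>UNIV. M' $ a $ c * P t $ c $ b + P' $ c $ b * M t $ a $ c)) (at t)"
    by (intro DERIV_sum DERIV_mult assms[unfolded has_matrix_derivative_def, rule_format])
  then show "((\<lambda>s. (M s ** P s) $ a $ b) has_real_derivative (M' ** P t + M t ** P') $ a $ b) (at t)"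
    by (simp add: matrix_matrix_mult_def sum.distrib mult.commute)
qed

lemma matrix_inv_left_right:
  fixes A :: "'a::semiring_1^'n^'m"
  assumes "invertible A"
  shows "A ** matrix_inv A = mat 1" "matrix_inv A ** A = mat 1"
proof -
  have "A ** matrix_inv A = mat 1 \<and> matrix_inv A ** A = mat 1"
    using assms unfolding invertible_def matrix_inv_def by (rule someI_ex)
  then show "A ** matrix_inv A = mat 1" "matrix_inv A ** A = mat 1" by auto
qed

lemma matrix_inv_eqI:
  fixes A B :: "real^'n^'n"
  assumes "A ** B = mat 1"
  shows "matrix_inv A = B"
proof -
  have "invertible A" using assms invertible_right_inverse by blast
  have "matrix_inv A = matrix_inv A ** (A ** B)" using assms by simp
  also have "\<dots> = B" by (simp add: matrix_mul_assoc matrix_inv_left_right[OF \<open>invertible A\<close>])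
  finally show ?thesis .
qed

lemma matrix_inv_cramer:
  fixes A :: "real^'n^'n"
  assumes "det A \<noteq> 0"
  shows "matrix_inv A $ a $ b = det (\<chi> i j. if j = a then axis b 1 $ i else A $ i $ j) / det A"
proof -
  have "invertible A" using assms invertible_det_nz by blast
  then have "A *v (matrix_inv A *v axis b 1) = axis b 1"
    by (simp add: matrix_vector_mul_assoc matrix_inv_left_right)
  then have "matrix_inv A *v axis b 1 = (\<chi> k. det (\<chi> i j. if j = k then axis b 1 $ i else A $ i $ j) / det A)"
    using cramer[OF assms] by blast
  then show ?thesis by (simp add: matrix_vector_mult_basis column_def vec_eq_iff)
qed

lemma has_real_derivative_det:
  fixes M :: "real \<Rightarrow> real^'n^'n"
  assumes "has_matrix_derivative M M' t"
  shows "((\<lambda>s. det (M s)) has_real_derivative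
     (\<Sum>a\<in>UNIV. det (\<chi> i. if i = a then row a M' else row i (M t)))) (at t)"
proof -
  let ?P = "{p. p permutes (UNIV::'n set)}"
  have "((\<lambda>s. det (M s)) has_real_derivative
     (\<Sum>p\<in>?P. of_int (sign p) * (\<Sum>a\<in>UNIV. M' $ a $ p a * (\<Prod>j\<in>UNIV-{a}. M t $ j $ p j)))) (at t)"
    unfolding det_def
    by (intro DERIV_sum DERIV_cmult has_field_derivative_prod
        assms[unfolded has_matrix_derivative_def, rule_format])
  moreover have "(\<Sum>p\<in>?P. of_int (sign p) * (\<Sum>a\<in>UNIV. M' $ a $ p a * (\<Prod>j\<in>UNIV-{a}. M t $ j $ p j)))
      = (\<Sum>a\<in>UNIV. \<Sum>p\<in>?P. of_int (sign p) * (M' $ a $ p a * (\<Prod>j\<in>UNIV-{a}. M t $ j $ p j)))"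
    by (simp add: sum_distrib_left sum.swap[of _ ?P])
  moreover have "(\<Prod>i\<in>UNIV. (\<chi> i. if i = a then row a M' else row i (M t)) $ i $ p i)
      = M' $ a $ p a * (\<Prod>j\<in>UNIV-{a}. M t $ j $ p j)" for a and p :: "'n \<Rightarrow> 'n"
    by (subst prod.remove[of UNIV a]) (auto simp: row_def intro!: prod.cong)
  ultimately show ?thesis by (simp add: det_def)
qed

lemma sum_det_replace_row:
  fixes M M' :: "real^'n^'n"
  assumes "invertible M"
  shows "(\<Sum>a\<in>UNIV. det (\<chi> i. if i = a then row a M' else row i M)) = det M * trace (M' ** matrix_inv M)"
proof -
  let ?C = "M' ** matrix_inv M"
  have "?C ** M = M' ** (matrix_inv M ** M)" by (simp only: matrix_mul_assoc)
  then have CM: "?C ** M = M'" by (simp add: matrix_inv_left_right[OF assms])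
  have row_M': "row a M' = (\<Sum>c\<in>UNIV. row a ?C $ c *s row c M)" for a
    by (subst (1) CM[symmetric]) (simp add: vec_eq_iff row_def matrix_matrix_mult_def sum_component)
  have "det (\<chi> i. if i = a then row a M' else row i M) = row a ?C $ a * det M" for a
  proof -
    have "(\<chi> i. if i = a then row a M' else row i M)
        = (\<chi> i. if i = a then (\<Sum>c\<in>UNIV. row a ?C $ c *s row c M) else row i M)"
      by (rule Cart_lambda_cong) (simp only: row_M' if_cancel)
    then show ?thesis by (simp only: cramer_lemma_transpose)
  qed
  then show ?thesis by (simp add: row_def trace_def sum_distrib_left mult.commute)
qed

lemma has_real_derivative_det_invertible:
  fixes M :: "real \<Rightarrow> real^'n^'n"
  assumes "has_matrix_derivative M M' t" "invertible (M t)"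
  shows "((\<lambda>s. det (M s)) has_real_derivative det (M t) * trace (M' ** matrix_inv (M t))) (at t)"
  using has_real_derivative_det[OF assms(1)] sum_det_replace_row[OF assms(2)] by simp

lemma eventually_det_nonzero:
  fixes M :: "real \<Rightarrow> real^'n^'n"
  assumes "has_matrix_derivative M M' t" "det (M t) \<noteq> 0"
  shows "eventually (\<lambda>s. det (M s) \<noteq> 0) (nhds t)"
proof -
  have "isCont (\<lambda>s. det (M s)) t"
    using has_real_derivative_det[OF assms(1)] by (rule DERIV_isCont)
  then show ?thesis
    using assms(2) by (simp add: isCont_def eventually_nhds_conv_at tendsto_imp_eventually_ne)
qed

lemma has_matrix_derivative_matrix_inv_ex:
  fixes M :: "real \<Rightarrow> real^'n^'n"
  assumes der: "has_matrix_derivative M M' t" and nz: "det (M t) \<noteq> 0"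
  shows "\<exists>N'. has_matrix_derivative (\<lambda>s. matrix_inv (M s)) N' t"
proof -
  have "\<exists>d. ((\<lambda>s. matrix_inv (M s) $ a $ b) has_real_derivative d) (at t)" for a b
  proof -
    define P where "P s = (\<chi> i j. if j = a then axis b (1::real) $ i else M s $ i $ j)" for s
    have "has_matrix_derivative P (\<chi> i j. if j = a then 0 else M' $ i $ j) t"
      using der unfolding has_matrix_derivative_def P_def by (auto intro: DERIV_const)
    then obtain dP where dP: "((\<lambda>s. det (P s)) has_real_derivative dP) (at t)"
      using has_real_derivative_det by blast
    obtain dM where dM: "((\<lambda>s. det (M s)) has_real_derivative dM) (at t)"
      using has_real_derivative_det[OF der] by blast
    have "((\<lambda>s. det (P s) / det (M s)) has_real_derivative
        (dP * det (M t) - det (P t) * dM) / (det (M t) * det (M t))) (at t)"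
      using dP dM nz by (rule DERIV_divide)
    moreover have ev: "eventually (\<lambda>s. matrix_inv (M s) $ a $ b = det (P s) / det (M s)) (nhds t)"
      using eventually_det_nonzero[OF der nz] by eventually_elim (simp add: matrix_inv_cramer P_def)
    ultimately show ?thesis
      using DERIV_cong_ev[OF refl ev refl] by blast
  qed
  then obtain d where "\<And>a b. ((\<lambda>s. matrix_inv (M s) $ a $ b) has_real_derivative d a b) (at t)"
    by metis
  then have "has_matrix_derivative (\<lambda>s. matrix_inv (M s)) (\<chi> a b. d a b) t"
    by (simp add: has_matrix_derivative_def)
  then show ?thesis ..
qed

lemma has_matrix_derivative_matrix_inv:
  fixes M :: "real \<Rightarrow> real^'n^'n"
  assumes der: "has_matrix_derivative M M' t" and nz: "det (M t) \<noteq> 0"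
  shows "has_matrix_derivative (\<lambda>s. matrix_inv (M s)) (- (matrix_inv (M t) ** M' ** matrix_inv (M t))) t"
proof -
  define N where "N = matrix_inv (M t)"
  obtain N' where N': "has_matrix_derivative (\<lambda>s. matrix_inv (M s)) N' t"
    using has_matrix_derivative_matrix_inv_ex[OF der nz] by blast
  have inv: "invertible (M t)" using nz invertible_det_nz by blast
  have "M' ** N + M t ** N' = 0"
  proof -
    have "eventually (\<lambda>s. (M s ** matrix_inv (M s)) $ a $ b = mat 1 $ a $ b) (nhds t)" for a b
      using eventually_det_nonzero[OF der nz]
      by eventually_elim (simp add: invertible_det_nz matrix_inv_left_right)
    then have "((\<lambda>s. (M s ** matrix_inv (M s)) $ a $ b) has_real_derivative 0) (at t)" for a b
      by (subst DERIV_cong_ev[OF refl _ refl]) (assumption, rule DERIV_const)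
    moreover have "has_matrix_derivative (\<lambda>s. M s ** matrix_inv (M s)) (M' ** N + M t ** N') t"
      unfolding N_def by (rule has_matrix_derivative_mult[OF der N'])
    ultimately have "(M' ** N + M t ** N') $ a $ b = 0" for a b
      unfolding has_matrix_derivative_def using DERIV_unique by blast
    then show ?thesis by (simp add: vec_eq_iff)
  qed
  then have "N ** (M' ** N + M t ** N') = 0" by simp
  then have "N ** M' ** N + N' = 0"
    by (simp add: matrix_add_ldistrib matrix_mul_assoc N_def matrix_inv_left_right[OF inv])
  then have "N' = - (N ** M' ** N)" by (simp add: eq_neg_iff_add_eq_0 add.commute)
  then show ?thesis using N' by (simp add: N_def)
qed

lemma matrix_inv_gram:
  fixes A :: "real^'n^'n"
  assumes "invertible A"
  shows "matrix_inv (transpose A ** A) = matrix_inv A ** transpose (matrix_inv A)"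
proof (rule matrix_inv_eqI)
  note AB = matrix_inv_left_right[OF assms]
  have "transpose A ** A ** (matrix_inv A ** transpose (matrix_inv A))
      = transpose A ** (A ** matrix_inv A) ** transpose (matrix_inv A)"
    by (simp add: matrix_mul_assoc)
  also have "\<dots> = transpose (matrix_inv A ** A)" by (simp only: AB(1) matrix_mul_rid matrix_transpose_mul)
  finally show "transpose A ** A ** (matrix_inv A ** transpose (matrix_inv A)) = mat 1"
    by (simp only: AB transpose_mat)
qed

lemma matrix_add_rdistrib: "((A::'a::semiring_1^'n^'m) + B) ** C = A ** C + B ** C"
  by (simp add: vec_eq_iff matrix_matrix_mult_def sum.distrib distrib_right)

lemma trace_transpose: "trace (transpose (A::'a::comm_semiring_1^'n^'n)) = trace A"
  by (simp add: trace_def transpose_def)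

lemma det_gram: "det (transpose A ** A) = (det (A::real^'n^'n))\<^sup>2"
  by (simp add: det_mul det_transpose power2_eq_square)

lemma has_matrix_derivative_gram:
  assumes "has_matrix_derivative A G t"
  shows "has_matrix_derivative (\<lambda>s. transpose (A s) ** A s) (transpose G ** A t + transpose (A t) ** G) t"
  using has_matrix_derivative_mult[OF has_matrix_derivative_transpose[OF assms] assms] by simp

lemma trace_gram_derivative:
  fixes A G :: "real^'n^'n"
  assumes "invertible A"
  shows "trace ((transpose G ** A + transpose A ** G) ** matrix_inv (transpose A ** A))
    = 2 * trace (matrix_inv A ** G)"
proof -
  define B where "B = matrix_inv A"
  have AB: "A ** B = mat 1" "B ** A = mat 1" using matrix_inv_left_right[OF assms] by (auto simp: B_def)
  have "transpose G ** A ** (B ** transpose B) = transpose G ** (A ** B) ** transpose B"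
    by (simp add: matrix_mul_assoc)
  then have "trace (transpose G ** A ** (B ** transpose B)) = trace (transpose (B ** G))"
    by (simp add: AB matrix_transpose_mul)
  moreover have "trace (transpose A ** G ** (B ** transpose B)) = trace (G ** B ** transpose (A ** B))"
    by (metis matrix_mul_assoc matrix_transpose_mul trace_mul_sym)
  ultimately show ?thesis
    using trace_mul_sym[of B G]
    by (simp add: matrix_inv_gram[OF assms] B_def[symmetric] matrix_add_rdistrib trace_add
        trace_transpose AB)
qed

lemma has_real_derivative_sqrt_det_gram:
  fixes A :: "real \<Rightarrow> real^'n^'n"
  assumes der: "has_matrix_derivative A G t" and nz: "det (A t) \<noteq> 0"
  shows "((\<lambda>s. sqrt (det (transpose (A s) ** A s))) has_real_derivative
      \<bar>det (A t)\<bar> * trace (matrix_inv (A t) ** G)) (at t)"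
proof -
  have inv: "invertible (A t)" using nz invertible_det_nz by blast
  have "invertible (transpose (A t) ** A t)"
    using nz by (simp add: invertible_det_nz det_gram)
  from has_real_derivative_det_invertible[OF has_matrix_derivative_gram[OF der] this]
  have "((\<lambda>s. det (transpose (A s) ** A s)) has_real_derivative
      (det (A t))\<^sup>2 * (2 * trace (matrix_inv (A t) ** G))) (at t)"
    by (simp add: det_gram trace_gram_derivative[OF inv])
  moreover have "0 < det (transpose (A t) ** A t)" using nz by (simp add: det_gram)
  ultimately have "((\<lambda>s. sqrt (det (transpose (A s) ** A s))) has_real_derivative
      inverse (sqrt (det (transpose (A t) ** A t))) / 2 * ((det (A t))\<^sup>2 * (2 * trace (matrix_inv (A t) ** G))))
      (at t)"
    by (intro DERIV_chain2[OF DERIV_real_sqrt])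
  moreover have "inverse (sqrt (det (transpose (A t) ** A t))) / 2 * ((det (A t))\<^sup>2 * (2 * trace (matrix_inv (A t) ** G)))
      = \<bar>det (A t)\<bar> * trace (matrix_inv (A t) ** G)"
    using nz by (simp add: det_gram field_simps power2_eq_square)
  ultimately show ?thesis by (rule DERIV_cong)
qed

lemma has_matrix_derivative_matrix_inv_gram:
  fixes A :: "real \<Rightarrow> real^'n^'n"
  assumes der: "has_matrix_derivative A G t" and nz: "det (A t) \<noteq> 0"
  defines "N \<equiv> matrix_inv (transpose (A t) ** A t)"
  shows "has_matrix_derivative (\<lambda>s. matrix_inv (transpose (A s) ** A s))
      (- (N ** (transpose G ** A t + transpose (A t) ** G) ** N)) t"
  using has_matrix_derivative_matrix_inv[OF has_matrix_derivative_gram[OF der]] nz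
  by (simp add: det_gram N_def)

lemma has_partials_sqrt_det_gram:
  fixes A :: "real^'n \<Rightarrow> real^'n^'n"
  assumes "\<And>k. has_matrix_derivative (\<lambda>s. A (x + s *\<^sub>R axis k 1)) (G k) 0" "det (A x) \<noteq> 0"
  shows "has_partials (\<lambda>y. sqrt (det (transpose (A y) ** A y)))
    (\<bar>det (A x)\<bar> *\<^sub>R (\<chi> k. trace (matrix_inv (A x) ** G k))) x"
  using has_real_derivative_sqrt_det_gram[OF assms(1)] assms(2)
  by (simp add: has_partials_def)

lemma has_partials_matrix_inv_gram:
  fixes A :: "real^'n \<Rightarrow> real^'n^'n"
  assumes "\<And>k. has_matrix_derivative (\<lambda>s. A (x + s *\<^sub>R axis k 1)) (G k) 0" "det (A x) \<noteq> 0"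
  defines "N \<equiv> matrix_inv (transpose (A x) ** A x)"
  shows "has_partials (\<lambda>y. matrix_inv (transpose (A y) ** A y) $ i $ j)
    (- (\<chi> k. (N ** (transpose (G k) ** A x + transpose (A x) ** G k) ** N) $ i $ j)) x"
  using has_matrix_derivative_matrix_inv_gram[OF assms(1)] assms(2)
  by (simp add: has_partials_def has_matrix_derivative_def N_def)

lemma sum_scaleR_column: "(\<Sum>j\<in>UNIV. w j *\<^sub>R column j A) = (A::real^'n^'m) *v (\<chi> j. w j)"
  by (simp add: vec_eq_iff matrix_vector_mult_def column_def sum_component mult.commute)

lemma sum_inner_column_scaleR_column:
  fixes A :: "real^'n^'n" and P :: "'n \<Rightarrow> real^'n^'n"
  shows "(\<Sum>i\<in>UNIV. \<Sum>j\<in>UNIV. ((\<chi> k. P k $ i $ j) \<bullet> column i A) *\<^sub>R column j A)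
    = A *v (\<chi> j. \<Sum>k\<in>UNIV. (A ** P k) $ k $ j)"
proof -
  have "(\<Sum>i\<in>UNIV. (\<chi> k. P k $ i $ j) \<bullet> column i A) = (\<Sum>k\<in>UNIV. (A ** P k) $ k $ j)" for j
  proof -
    have "(\<Sum>i\<in>UNIV. (\<chi> k. P k $ i $ j) \<bullet> column i A) = (\<Sum>i\<in>UNIV. \<Sum>k\<in>UNIV. P k $ i $ j * A $ k $ i)"
      by (simp add: inner_vec_def column_def)
    also have "\<dots> = (\<Sum>k\<in>UNIV. \<Sum>i\<in>UNIV. P k $ i $ j * A $ k $ i)"
      by (rule sum.swap)
    finally show ?thesis by (simp add: matrix_matrix_mult_def mult.commute)
  qed
  then show ?thesis
    by (subst sum.swap) (simp add: scaleR_sum_left[symmetric] sum_scaleR_column)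
qed

lemma sum_inverse_gram_frame_expansion:
  fixes A :: "real^'n^'n"
  assumes "invertible A"
  shows "(\<Sum>i\<in>UNIV. \<Sum>j\<in>UNIV. (matrix_inv (transpose A ** A) $ i $ j * (v \<bullet> column i A)) *\<^sub>R column j A) = v"
proof -
  define B where "B = matrix_inv A"
  have AB: "A ** B = mat 1" using matrix_inv_left_right[OF assms] by (simp add: B_def)
  have "(\<Sum>i\<in>UNIV. matrix_inv (transpose A ** A) $ i $ j * (v \<bullet> column i A))
      = ((transpose A *v v) v* (B ** transpose B)) $ j" for j
    unfolding matrix_inv_gram[OF assms] B_def[symmetric]
    by (simp add: vector_matrix_mult_def inner_vec_def column_def matrix_vector_mult_def
        transpose_def mult.commute)
  then have "(\<Sum>i\<in>UNIV. \<Sum>j\<in>UNIV. (matrix_inv (transpose A ** A) $ i $ j * (v \<bullet> column i A)) *\<^sub>R column j A)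
      = A *v ((transpose A *v v) v* (B ** transpose B))"
    by (subst sum.swap) (simp add: scaleR_sum_left[symmetric] sum_scaleR_column)
  also have "\<dots> = A *v (transpose (B ** transpose B) *v (transpose A *v v))"
    by (simp only: transpose_matrix_vector)
  also have "\<dots> = (A ** B) ** transpose (A ** B) *v v"
    by (simp add: matrix_vector_mul_assoc matrix_transpose_mul matrix_mul_assoc
        del: transpose_matrix_vector)
  finally show ?thesis by (simp add: AB)
qed

lemma mult_inverse_gram_derivative:
  fixes A G :: "real^'n^'n"
  assumes inv: "invertible A"
  defines "B \<equiv> matrix_inv A" and "N \<equiv> matrix_inv (transpose A ** A)"
  shows "A ** (N ** (transpose G ** A + transpose A ** G) ** N) = transpose (B ** (G ** B)) + G ** N"
proof -
  have AB: "A ** B = mat 1" using matrix_inv_left_right[OF inv] by (simp add: B_def)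
  have N: "N = B ** transpose B" by (simp add: N_def B_def matrix_inv_gram[OF inv])
  have tBA: "transpose B ** transpose A = mat 1"
    by (metis AB matrix_transpose_mul transpose_mat)
  have "A ** (N ** (transpose G ** A + transpose A ** G) ** N)
      = (A ** B) ** transpose B ** (transpose G ** A + transpose A ** G) ** (B ** transpose B)"
    by (simp add: N matrix_mul_assoc)
  also have "\<dots> = transpose B ** (transpose G ** A + transpose A ** G) ** (B ** transpose B)"
    by (simp add: AB)
  also have "\<dots> = transpose B ** transpose G ** (A ** B) ** transpose B
      + (transpose B ** transpose A) ** G ** (B ** transpose B)"
    by (simp add: matrix_add_ldistrib matrix_add_rdistrib matrix_mul_assoc)
  also have "\<dots> = transpose (B ** (G ** B)) + G ** N"
    by (simp add: AB tBA N matrix_transpose_mul matrix_mul_assoc)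
  finally show ?thesis .
qed

lemma sum_inverse_gram_derivative_frame_expansion:
  fixes A :: "real^'n^'n" and G :: "'n \<Rightarrow> real^'n^'n"
  assumes inv: "invertible A"
  defines "B \<equiv> matrix_inv A" and "N \<equiv> matrix_inv (transpose A ** A)"
  shows "(\<Sum>i\<in>UNIV. \<Sum>j\<in>UNIV.
      ((\<chi> k. (N ** (transpose (G k) ** A + transpose A ** G k) ** N) $ i $ j) \<bullet> column i A) *\<^sub>R column j A)
    = (\<chi> l. \<Sum>k\<in>UNIV. (G k ** B) $ l $ k) + (\<chi> m. \<Sum>k\<in>UNIV. G k $ k $ m) v* B"
proof -
  have AB: "A ** B = mat 1" using matrix_inv_left_right[OF inv] by (simp add: B_def)
  have N: "N = B ** transpose B" by (simp add: N_def B_def matrix_inv_gram[OF inv])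
  have "A ** (N ** (transpose (G k) ** A + transpose A ** G k) ** N)
      = transpose (B ** (G k ** B)) + G k ** N" for k
    unfolding B_def N_def by (rule mult_inverse_gram_derivative[OF inv])
  then have "(\<Sum>i\<in>UNIV. \<Sum>j\<in>UNIV.
      ((\<chi> k. (N ** (transpose (G k) ** A + transpose A ** G k) ** N) $ i $ j) \<bullet> column i A) *\<^sub>R column j A)
    = A *v (\<chi> j. \<Sum>k\<in>UNIV. (transpose (B ** (G k ** B)) + G k ** N) $ k $ j)"
    by (simp add: sum_inner_column_scaleR_column)
  also have "(\<chi> j. \<Sum>k\<in>UNIV. (transpose (B ** (G k ** B)) + G k ** N) $ k $ j)
      = (\<chi> j. \<Sum>k\<in>UNIV. (B ** (G k ** B)) $ j $ k) + (\<chi> j. \<Sum>k\<in>UNIV. (G k ** N) $ k $ j)"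
    by (simp add: vec_eq_iff transpose_def sum.distrib)
  also have "(\<chi> j. \<Sum>k\<in>UNIV. (B ** (G k ** B)) $ j $ k) = B *v (\<chi> l. \<Sum>k\<in>UNIV. (G k ** B) $ l $ k)"
    unfolding vec_eq_iff matrix_matrix_mult_def[of B] matrix_vector_mult_def
    by (simp add: sum_distrib_left) (rule allI, rule sum.swap)
  also have "(\<chi> j. \<Sum>k\<in>UNIV. (G k ** N) $ k $ j) = transpose N *v (\<chi> m. \<Sum>k\<in>UNIV. G k $ k $ m)"
    unfolding vec_eq_iff matrix_matrix_mult_def[of "G _"] matrix_vector_mult_def transpose_def
    by (simp add: sum_distrib_left mult.commute) (rule allI, rule sum.swap)
  finally show ?thesis
    by (simp add: matrix_vector_right_distrib matrix_vector_mul_assoc AB N matrix_mul_assoc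
        matrix_transpose_mul del: transpose_matrix_vector) simp
qed

lemma sum_derivative_mult_inverse_eq_trace:
  fixes A B :: "real^'n^'n" and G :: "'n \<Rightarrow> real^'n^'n" and F :: "real^'n"
  assumes AB: "A ** B = mat 1"
    and curl: "\<And>k l i. G k $ l $ i - G l $ k $ i = \<alpha> * (F $ k * A $ l $ i - F $ l * A $ k $ i)"
  shows "(\<Sum>k\<in>UNIV. (G k ** B) $ l $ k) = trace (B ** G l) + \<alpha> * (1 - real CARD('n)) * F $ l"
proof -
  have "(G k ** B) $ l $ k - (G l ** B) $ k $ k = \<alpha> * F $ k * (A ** B) $ l $ k - \<alpha> * F $ l * (A ** B) $ k $ k"
    for k
  proof -
    have "(G k ** B) $ l $ k - (G l ** B) $ k $ k = (\<Sum>p\<in>UNIV. (G k $ l $ p - G l $ k $ p) * B $ p $ k)"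
      by (simp add: matrix_matrix_mult_def sum_subtractf left_diff_distrib)
    also have "\<dots> = \<alpha> * F $ k * (A ** B) $ l $ k - \<alpha> * F $ l * (A ** B) $ k $ k"
      by (simp add: curl matrix_matrix_mult_def sum_distrib_left sum_subtractf algebra_simps)
    finally show ?thesis .
  qed
  then have "(G k ** B) $ l $ k
      = (G l ** B) $ k $ k + \<alpha> * (F $ k * mat 1 $ l $ k) - \<alpha> * (F $ l * mat 1 $ k $ k)" for k
    by (simp add: AB algebra_simps)
  then have "(\<Sum>k\<in>UNIV. (G k ** B) $ l $ k) = (\<Sum>k\<in>UNIV. (G l ** B) $ k $ k)
      + \<alpha> * (\<Sum>k\<in>UNIV. F $ k * mat 1 $ l $ k) - \<alpha> * F $ l * trace (mat 1 :: real^'n^'n)"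
    by (simp add: sum.distrib sum_subtractf sum_distrib_left trace_def mult.assoc)
  also have "\<dots> = trace (B ** G l) + \<alpha> * (1 - real CARD('n)) * F $ l"
  proof -
    have "(\<Sum>k\<in>UNIV. F $ k * mat 1 $ l $ k) = F $ l"
      by (simp add: mat_def if_distrib[of "\<lambda>x. _ * x"] cong: if_cong)
    then show ?thesis
      using trace_mul_sym[of "G l" B] by (simp add: trace_I trace_def[of "G l ** B"] algebra_simps)
  qed
  finally show ?thesis .
qed

lemma divergence_vector_mult_inverse:
  fixes A B :: "real^'n^'n" and G :: "'n \<Rightarrow> real^'n^'n" and F :: "real^'n"
  assumes AB: "A ** B = mat 1"
    and div: "\<And>i. (\<Sum>k\<in>UNIV. G k $ k $ i) = (\<alpha> - 1) * (F \<bullet> column i A)"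
  shows "(\<chi> m. \<Sum>k\<in>UNIV. G k $ k $ m) v* B = (\<alpha> - 1) *\<^sub>R F"
proof -
  have "(\<chi> m. \<Sum>k\<in>UNIV. G k $ k $ m) = (\<alpha> - 1) *\<^sub>R (F v* A)"
    by (simp add: vec_eq_iff div vector_matrix_mult_def inner_vec_def column_def)
  then show ?thesis
    by (simp add: vector_matrix_mul_assoc AB scaleR_vector_matrix_assoc)
qed

lemma sum_inverse_gram_derivative_frame_curl_div:
  fixes A :: "real^'n^'n" and G :: "'n \<Rightarrow> real^'n^'n" and F :: "real^'n"
  assumes inv: "invertible A"
    and curl: "\<And>k l i. G k $ l $ i - G l $ k $ i = \<alpha> * (F $ k * A $ l $ i - F $ l * A $ k $ i)"
    and div: "\<And>i. (\<Sum>k\<in>UNIV. G k $ k $ i) = (\<alpha> - 1) * (F \<bullet> column i A)"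
  defines "N \<equiv> matrix_inv (transpose A ** A)"
  shows "(\<Sum>i\<in>UNIV. \<Sum>j\<in>UNIV.
      ((\<chi> k. (N ** (transpose (G k) ** A + transpose A ** G k) ** N) $ i $ j) \<bullet> column i A) *\<^sub>R column j A)
    = (\<chi> l. trace (matrix_inv A ** G l)) - ((real CARD('n) - 2) * \<alpha> + 1) *\<^sub>R F"
proof -
  have AB: "A ** matrix_inv A = mat 1" using matrix_inv_left_right[OF inv] by simp
  show ?thesis
    unfolding N_def sum_inverse_gram_derivative_frame_expansion[OF inv]
      divergence_vector_mult_inverse[OF AB div]
    using sum_derivative_mult_inverse_eq_trace[OF AB curl]
    by (simp add: vec_eq_iff algebra_simps)
qed

lemma gram_inverse_frame_identities:
  fixes A :: "real^'n \<Rightarrow> real^'n^'n" and G :: "'n \<Rightarrow> real^'n^'n" and F :: "real^'n"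
  assumes der: "\<And>k. has_matrix_derivative (\<lambda>s. A (x + s *\<^sub>R axis k 1)) (G k) 0"
    and nz: "det (A x) \<noteq> 0"
    and curl: "\<And>k l i. G k $ l $ i - G l $ k $ i = \<alpha> * (F $ k * A x $ l $ i - F $ l * A x $ k $ i)"
    and div: "\<And>i. (\<Sum>k\<in>UNIV. G k $ k $ i) = (\<alpha> - 1) * (F \<bullet> column i (A x))"
  defines "N \<equiv> \<lambda>y. matrix_inv (transpose (A y) ** A y)"
    and "D \<equiv> \<lambda>y. sqrt (det (transpose (A y) ** A y))"
    and "c \<equiv> (real CARD('n) - 2) * \<alpha> + 1"
  shows "(\<Sum>i\<in>UNIV. \<Sum>j\<in>UNIV. (grad (\<lambda>y. N y $ i $ j) x \<bullet> column i (A x)) *\<^sub>R column j (A x))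
      = c *\<^sub>R F - grad (\<lambda>y. ln (D y)) x"
    and "(\<Sum>i\<in>UNIV. \<Sum>j\<in>UNIV. (grad (\<lambda>y. D y * N y $ i $ j) x \<bullet> column i (A x)) *\<^sub>R column j (A x))
      = (D x * c) *\<^sub>R F"
proof -
  define t where "t = (\<chi> k. trace (matrix_inv (A x) ** G k))"
  have inv: "invertible (A x)" using nz invertible_det_nz by blast
  have Dx: "D x = \<bar>det (A x)\<bar>" by (simp add: D_def det_gram)
  have Dpos: "D x > 0" using nz by (simp add: Dx)
  have dD: "has_partials D (D x *\<^sub>R t) x"
    unfolding Dx unfolding D_def t_def by (rule has_partials_sqrt_det_gram[OF der nz])
  note dN = has_partials_matrix_inv_gram[OF der nz]
  have grad_lnD: "grad (\<lambda>y. ln (D y)) x = t"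
    using grad_eqI[OF has_partials_ln[OF dD Dpos]] Dpos by simp
  have sum_N: "(\<Sum>i\<in>UNIV. \<Sum>j\<in>UNIV. (grad (\<lambda>y. N y $ i $ j) x \<bullet> column i (A x)) *\<^sub>R column j (A x))
      = c *\<^sub>R F - t"
    using sum_inverse_gram_derivative_frame_curl_div[OF inv curl div]
    by (simp add: N_def grad_eqI[OF dN] sum_negf t_def c_def)
  then show "(\<Sum>i\<in>UNIV. \<Sum>j\<in>UNIV. (grad (\<lambda>y. N y $ i $ j) x \<bullet> column i (A x)) *\<^sub>R column j (A x))
      = c *\<^sub>R F - grad (\<lambda>y. ln (D y)) x"
    by (simp add: grad_lnD)
  have "grad (\<lambda>y. D y * N y $ i $ j) x = (N x $ i $ j * D x) *\<^sub>R t + D x *\<^sub>R grad (\<lambda>y. N y $ i $ j) x"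
    for i j
    using grad_eqI[OF has_partials_mult[OF dD dN]] grad_eqI[OF dN] by (simp add: N_def)
  then have "(\<Sum>i\<in>UNIV. \<Sum>j\<in>UNIV. (grad (\<lambda>y. D y * N y $ i $ j) x \<bullet> column i (A x)) *\<^sub>R column j (A x))
      = D x *\<^sub>R (\<Sum>i\<in>UNIV. \<Sum>j\<in>UNIV. (N x $ i $ j * (t \<bullet> column i (A x))) *\<^sub>R column j (A x))
        + D x *\<^sub>R (\<Sum>i\<in>UNIV. \<Sum>j\<in>UNIV. (grad (\<lambda>y. N y $ i $ j) x \<bullet> column i (A x)) *\<^sub>R column j (A x))"
    by (simp add: inner_add_left scaleR_add_left sum.distrib scaleR_sum_right algebra_simps)
  also have "\<dots> = D x *\<^sub>R t + D x *\<^sub>R (c *\<^sub>R F - t)"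
    unfolding sum_N using sum_inverse_gram_frame_expansion[OF inv, of t] by (simp add: N_def)
  finally show "(\<Sum>i\<in>UNIV. \<Sum>j\<in>UNIV. (grad (\<lambda>y. D y * N y $ i $ j) x \<bullet> column i (A x)) *\<^sub>R column j (A x))
      = (D x * c) *\<^sub>R F"
    by (simp add: algebra_simps)
qed

lemma divergence_scaleR_grad:
  fixes \<sigma> u :: "real^'n \<Rightarrow> real"
  assumes "\<sigma> differentiable (at x)" "\<And>k. partial u k differentiable (at x)"
  shows "divergence (\<lambda>y. \<sigma> y *\<^sub>R grad u y) x
    = (\<Sum>k\<in>UNIV. partial \<sigma> k x * partial u k x) + \<sigma> x * (\<Sum>k\<in>UNIV. partial (partial u k) k x)"
proof -
  have "partial (\<lambda>y. \<sigma> y * partial u k y) k x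
      = partial \<sigma> k x * partial u k x + \<sigma> x * partial (partial u k) k x" for k
    using grad_eqI[OF has_partials_mult[OF has_partials_grad[OF assms(1)] has_partials_grad[OF assms(2)]]]
    by (simp add: grad_def vec_eq_iff mult.commute)
  then show ?thesis
    by (simp add: divergence_def grad_def sum.distrib sum_distrib_left)
qed

lemma conductivity_frame_derivative:
  fixes \<sigma> :: "real^'n \<Rightarrow> real" and u :: "'n \<Rightarrow> real^'n \<Rightarrow> real" and \<alpha> :: real
  assumes X: "open X" "x \<in> X"
    and \<sigma>: "\<sigma> differentiable (at x)" "\<sigma> x > 0"
    and u: "\<And>i. Ck 2 (u i) X"
    and u_sol: "\<And>i. divergence (\<lambda>y. \<sigma> y *\<^sub>R grad (u i) y) x = 0"
  defines "A \<equiv> \<lambda>y. \<chi> l i. \<sigma> y powr \<alpha> * partial (u i) l y"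
    and "F \<equiv> grad (\<lambda>y. ln (\<sigma> y)) x"
  obtains G where "\<And>k. has_matrix_derivative (\<lambda>s. A (x + s *\<^sub>R axis k 1)) (G k) 0"
    and "\<And>k l i. G k $ l $ i - G l $ k $ i = \<alpha> * (F $ k * A x $ l $ i - F $ l * A x $ k $ i)"
    and "\<And>i. (\<Sum>k\<in>UNIV. G k $ k $ i) = (\<alpha> - 1) * (F \<bullet> column i (A x))"
proof
  define G where "G k = (\<chi> l i. \<alpha> * \<sigma> x powr (\<alpha> - 1) * partial \<sigma> k x * partial (u i) l x
      + \<sigma> x powr \<alpha> * partial (partial (u i) l) k x)" for k
  have du: "u i differentiable (at x)" "partial (u i) l differentiable (at x)" for i l
    using u[of i] X by (auto simp: Ck_2_iff)
  have F: "F $ k = partial \<sigma> k x / \<sigma> x" for k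
    using grad_eqI[OF has_partials_ln[OF has_partials_grad[OF \<sigma>(1)] \<sigma>(2)]]
    by (simp add: F_def grad_def)
  have pw: "\<sigma> x powr \<alpha> = \<sigma> x powr (\<alpha> - 1) * \<sigma> x"
    using \<sigma>(2) by (simp add: powr_diff)
  show "has_matrix_derivative (\<lambda>s. A (x + s *\<^sub>R axis k 1)) (G k) 0" for k
    unfolding has_matrix_derivative_def
  proof (intro allI)
    fix l i
    have "\<sigma> (x + 0 *\<^sub>R axis k 1) > 0" using \<sigma>(2) by simp
    from DERIV_mult[OF DERIV_fun_powr[OF has_real_derivative_partial[OF \<sigma>(1)] this]
        has_real_derivative_partial[OF du(2)]]
    show "((\<lambda>s. A (x + s *\<^sub>R axis k 1) $ l $ i) has_real_derivative G k $ l $ i) (at 0)"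
      by (simp add: A_def G_def mult_ac)
  qed
  show "G k $ l $ i - G l $ k $ i = \<alpha> * (F $ k * A x $ l $ i - F $ l * A x $ k $ i)" for k l i
    using Ck_2_partial_commute[OF u X(1,2), of i k l] \<sigma>(2)
    by (simp add: G_def A_def F pw field_simps)
  show "(\<Sum>k\<in>UNIV. G k $ k $ i) = (\<alpha> - 1) * (F \<bullet> column i (A x))" for i
  proof -
    define s where "s = (\<Sum>k\<in>UNIV. partial \<sigma> k x * partial (u i) k x)"
    have lap: "\<sigma> x * (\<Sum>k\<in>UNIV. partial (partial (u i) k) k x) = - s"
      using u_sol[of i] divergence_scaleR_grad[OF \<sigma>(1) du(2)] by (simp add: s_def)
    have "(\<Sum>k\<in>UNIV. G k $ k $ i) = \<alpha> * \<sigma> x powr (\<alpha> - 1) * s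
        + \<sigma> x powr (\<alpha> - 1) * (\<sigma> x * (\<Sum>k\<in>UNIV. partial (partial (u i) k) k x))"
      by (simp add: G_def s_def pw sum.distrib sum_distrib_left mult_ac)
    also have "\<dots> = (\<alpha> - 1) * (\<sigma> x powr (\<alpha> - 1) * s)"
      by (simp add: lap algebra_simps)
    also have "\<sigma> x powr (\<alpha> - 1) * s = F \<bullet> column i (A x)"
      using \<sigma>(2) by (simp add: s_def F A_def inner_vec_def column_def pw sum_distrib_left field_simps)
    finally show ?thesis .
  qed
qed

lemma conductivity_gram_inverse_identities:
  fixes \<sigma> :: "real^'n \<Rightarrow> real" and u :: "'n \<Rightarrow> real^'n \<Rightarrow> real" and \<alpha> :: real
    and A :: "real^'n \<Rightarrow> real^'n^'n"
  assumes X: "open X" "x \<in> X"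
    and \<sigma>: "\<sigma> differentiable (at x)" "\<sigma> x > 0"
    and u: "\<And>i. Ck 2 (u i) X"
    and u_sol: "\<And>i. divergence (\<lambda>y. \<sigma> y *\<^sub>R grad (u i) y) x = 0"
    and A: "A = (\<lambda>y. \<chi> l i. \<sigma> y powr \<alpha> * partial (u i) l y)"
    and nz: "det (A x) \<noteq> 0"
  defines "N \<equiv> \<lambda>y. matrix_inv (transpose (A y) ** A y)"
    and "D \<equiv> \<lambda>y. sqrt (det (transpose (A y) ** A y))"
    and "c \<equiv> (real CARD('n) - 2) * \<alpha> + 1"
  shows "(\<Sum>i\<in>UNIV. \<Sum>j\<in>UNIV. (grad (\<lambda>y. N y $ i $ j) x \<bullet> column i (A x)) *\<^sub>R column j (A x))
      = c *\<^sub>R grad (\<lambda>y. ln (\<sigma> y)) x - grad (\<lambda>y. ln (D y)) x"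
    and "(\<Sum>i\<in>UNIV. \<Sum>j\<in>UNIV. (grad (\<lambda>y. D y * N y $ i $ j) x \<bullet> column i (A x)) *\<^sub>R column j (A x))
      = (D x * c) *\<^sub>R grad (\<lambda>y. ln (\<sigma> y)) x"
proof -
  obtain G where "\<And>k. has_matrix_derivative (\<lambda>s. A (x + s *\<^sub>R axis k 1)) (G k) 0"
    and "\<And>k l i. G k $ l $ i - G l $ k $ i = \<alpha> * (grad (\<lambda>y. ln (\<sigma> y)) x $ k * A x $ l $ i
        - grad (\<lambda>y. ln (\<sigma> y)) x $ l * A x $ k $ i)"
    and "\<And>i. (\<Sum>k\<in>UNIV. G k $ k $ i) = (\<alpha> - 1) * (grad (\<lambda>y. ln (\<sigma> y)) x \<bullet> column i (A x))"
    unfolding A by (rule conductivity_frame_derivative[where u = u, OF X \<sigma> u u_sol]) blast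
  from gram_inverse_frame_identities[OF this(1) nz this(2,3)]
  show "(\<Sum>i\<in>UNIV. \<Sum>j\<in>UNIV. (grad (\<lambda>y. N y $ i $ j) x \<bullet> column i (A x)) *\<^sub>R column j (A x))
      = c *\<^sub>R grad (\<lambda>y. ln (\<sigma> y)) x - grad (\<lambda>y. ln (D y)) x"
    and "(\<Sum>i\<in>UNIV. \<Sum>j\<in>UNIV. (grad (\<lambda>y. D y * N y $ i $ j) x \<bullet> column i (A x)) *\<^sub>R column j (A x))
      = (D x * c) *\<^sub>R grad (\<lambda>y. ln (\<sigma> y)) x"
    by (simp_all add: N_def D_def c_def)
qed

theorem lemma2p2:
  fixes X \<Omega> :: "(real^'n) set"
    and \<alpha> c0 :: real
    and \<sigma> :: "real^'n \<Rightarrow> real"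
    and u :: "'n \<Rightarrow> real^'n \<Rightarrow> real"
    and S :: "'n \<Rightarrow> real^'n \<Rightarrow> real^'n"
    and H :: "real^'n \<Rightarrow> real^'n^'n"
    and D :: "real^'n \<Rightarrow> real"
  assumes n2: "CARD('n) \<ge> 2"
    and X: "open X" "convex X" "bounded X"
    and alpha: "(real CARD('n) - 2) * \<alpha> + 1 \<noteq> 0"
    and sigma_pos: "\<forall>x\<in>X. \<sigma> x > 0"
    and sigma_smooth: "Ck 2 \<sigma> X"
    and u_smooth: "\<forall>i. Ck 2 (u i) X"
    and u_sol: "\<forall>i. \<forall>x\<in>X. divergence (\<lambda>y. \<sigma> y *\<^sub>R grad (u i) y) x = 0"
    and S_def: "\<forall>i x. S i x = (\<sigma> x powr \<alpha>) *\<^sub>R grad (u i) x"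
    and Omega: "open \<Omega>" "\<Omega> \<subseteq> X"
    and c0: "c0 > 0" "\<forall>x\<in>\<Omega>. det (\<chi> k i. S i x $ k) \<ge> c0"
    and H_def: "\<forall>x. H x = (\<chi> i j. S i x \<bullet> S j x)"
    and D_def: "\<forall>x. D x = sqrt (det (H x))"
    and x: "x \<in> \<Omega>"
  shows "(grad (\<lambda>y. ln (\<sigma> y)) x
           = (1 / ((real CARD('n) - 2) * \<alpha> + 1) / D x) *\<^sub>R
               (\<Sum>i\<in>UNIV. \<Sum>j\<in>UNIV.
                  (grad (\<lambda>y. D y * matrix_inv (H y) $ i $ j) x \<bullet> S i x) *\<^sub>R S j x)) \<and>
         (grad (\<lambda>y. ln (\<sigma> y)) x
           = (1 / ((real CARD('n) - 2) * \<alpha> + 1)) *\<^sub>R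
               (grad (\<lambda>y. ln (D y)) x +
                (\<Sum>i\<in>UNIV. \<Sum>j\<in>UNIV.
                  (grad (\<lambda>y. matrix_inv (H y) $ i $ j) x \<bullet> S i x) *\<^sub>R S j x)))"
proof -
  define A where "A = (\<lambda>y. \<chi> l i. \<sigma> y powr \<alpha> * partial (u i) l y)"
  have S: "S i y = column i (A y)" for i y
    by (simp add: S_def A_def column_def grad_def vec_eq_iff)
  have H: "H = (\<lambda>y. transpose (A y) ** A y)"
    by (simp add: fun_eq_iff vec_eq_iff H_def S inner_vec_def column_def transpose_def
        matrix_matrix_mult_def mult.commute)
  have D: "D = (\<lambda>y. sqrt (det (transpose (A y) ** A y)))"
    by (simp add: fun_eq_iff D_def H)
  have xX: "x \<in> X" using x Omega(2) by blast
  have "det (A x) \<ge> c0" using c0(2) x by (simp add: S column_def)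
  then have nz: "det (A x) \<noteq> 0" using c0(1) by linarith
  then have "D x > 0" by (simp add: D det_gram)
  have "\<sigma> differentiable (at x)" "\<sigma> x > 0"
    using sigma_smooth sigma_pos xX by (simp_all add: Ck_2_iff)
  from conductivity_gram_inverse_identities[where u = u, OF X(1) xX this u_smooth[rule_format]
      u_sol[rule_format, OF xX] A_def nz] \<open>D x > 0\<close> alpha
  show ?thesis by (simp add: S H D)
qed

end
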